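(* Consider a finite Markov chain on a set $Q$ of states with $|Q|=n$. Let $x$ denote the smallest nonzero transition probability of the chain. Let $p\in Q$ and $S\subseteq Q$. For runs starting in $p$, define $T=k$ if the run hits a state of $S$ for the first time after exactly $k$ steps, and let $T$ be undefined if the run never hits $S$. Then $\mathcal{P}(T\ge k)\le 2c^k$ for all $k\ge n$, where $c:=\exp(-x^n/n)$.
   Context: $\mathcal{P}(T\ge k)$ denotes the probability of the set of runs from $p$ for which $T$ is defined and $T\ge k$. *)

theory Defs
  imports Complex_Main
begin

text \<open>A finite Markov chain on the finite state type 'q (so n = CARD('q)),
given by its transition matrix P (nonnegative entries, rows summing to 1).\<close>

definition stochastic :: "('q::finite \<Rightarrow> 'q \<Rightarrow> real) \<Rightarrow> bool" where
  "stochastic P \<longleftrightarrow> (\<forall>a b. 0 \<le> P a b) \<and> (\<forall>a. (\<Sum>b\<in>UNIV. P a b) = 1)"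

definition min_trans :: "('q::finite \<Rightarrow> 'q \<Rightarrow> real) \<Rightarrow> real" where
  "min_trans P = Min {P a b | a b. P a b \<noteq> 0}"

text \<open>Probability that a run from p hits S for the first time after exactly j steps
 (step 0 included): sum over finite path prefixes p = w_0, ..., w_j with
 w_i \<notin> S for i < j and w_j \<in> S of the product of transition probabilities.\<close>
definition first_hit_prob :: "('q::finite \<Rightarrow> 'q \<Rightarrow> real) \<Rightarrow> 'q \<Rightarrow> 'q set \<Rightarrow> nat \<Rightarrow> real" where
  "first_hit_prob P p S j =
     (\<Sum>w \<in> {w :: 'q list. length w = Suc j \<and> w ! 0 = p \<and> (\<forall>i<j. w ! i \<notin> S) \<and> w ! j \<in> S}.
        \<Prod>i<j. P (w ! i) (w ! Suc i))"

text \<open>P(T \<ge> k): probability of the runs from p for which T is defined and T \<ge> k,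
 i.e. the (countably additive) sum of the disjoint events T = j, j \<ge> k.\<close>
definition hit_tail_prob :: "('q::finite \<Rightarrow> 'q \<Rightarrow> real) \<Rightarrow> 'q \<Rightarrow> 'q set \<Rightarrow> nat \<Rightarrow> real" where
  "hit_tail_prob P p S k = (\<Sum>j. first_hit_prob P p S (j + k))"

end

theory Submission
  imports Defs
begin

text \<open>From every
state \<open>a\<close> that hits \<open>S\<close> with positive probability, \<open>S\<close> is reachable along a path of
fewer than \<open>n\<close> steps, so \<open>S\<close> is hit within \<open>n\<close> steps with probability at least \<open>x\<^sup>n\<close>.
Hence the probability of surviving \<open>n\<close> steps outside \<open>S\<close> among such states is at most
\<open>1 - x\<^sup>n\<close>, and by the Markov property the probability of surviving \<open>k\<close> steps is at most
\<open>(1 - x\<^sup>n)\<^bsup>\<lfloor>k/n\<rfloor>\<^esup>\<close>; runs that hit \<open>S\<close> at time \<open>\<ge> k\<close> are among these.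
The elementary estimate \<open>1 - z \<le> 2 exp (-2z)\<close> turns this into \<open>2 exp (-x\<^sup>n/n)\<^sup>k\<close>.\<close>

lemma stochastic_nonneg: "stochastic P \<Longrightarrow> 0 \<le> P a b"
  by (simp add: stochastic_def)

lemma stochastic_sum: "stochastic P \<Longrightarrow> (\<Sum>b\<in>UNIV. P a b) = 1"
  by (simp add: stochastic_def)

lemma stochastic_convex_le:
  assumes "stochastic P" and "\<And>b. f b \<le> B"
  shows "(\<Sum>b\<in>UNIV. P a b * f b) \<le> B"
proof -
  have "(\<Sum>b\<in>UNIV. P a b * f b) \<le> (\<Sum>b\<in>UNIV. P a b * B)"
    using assms by (intro sum_mono mult_left_mono) (auto simp: stochastic_nonneg)
  also have "\<dots> = B"
    using assms by (simp add: sum_distrib_right[symmetric] stochastic_sum)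
  finally show ?thesis .
qed

subsection \<open>The smallest nonzero transition probability\<close>

lemma stochastic_le_1:
  assumes "stochastic P"
  shows "P a b \<le> 1"
proof -
  have "P a b \<le> (\<Sum>c\<in>UNIV. P a c)"
    using assms by (intro member_le_sum) (auto simp: stochastic_nonneg)
  then show ?thesis using stochastic_sum[OF assms] by simp
qed

lemma finite_nonzero_values:
  fixes P :: "'q::finite \<Rightarrow> 'q \<Rightarrow> 'b::zero"
  shows "finite {P a b | a b. P a b \<noteq> 0}"
  by (rule finite_subset[of _ "range (case_prod P)"]) auto

lemma min_trans_le: "P a b \<noteq> 0 \<Longrightarrow> min_trans P \<le> P a b"
  unfolding min_trans_def by (intro Min_le finite_nonzero_values) auto

lemma min_trans_attained:
  assumes "stochastic P"
  obtains a b where "min_trans P = P a b" "P a b \<noteq> 0"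
proof -
  obtain a :: 'a where True by simp
  from stochastic_sum[OF assms, of a] obtain b where "P a b \<noteq> 0"
    by (metis sum.neutral zero_neq_one)
  then have "{P a b | a b. P a b \<noteq> 0} \<noteq> {}" by blast
  from Min_in[OF finite_nonzero_values this] show ?thesis
    using that unfolding min_trans_def by blast
qed

lemma min_trans_pos: "stochastic P \<Longrightarrow> 0 < min_trans P"
  by (metis min_trans_attained stochastic_nonneg order_le_neq_trans)

lemma min_trans_le_1: "stochastic P \<Longrightarrow> min_trans P \<le> 1"
  by (metis min_trans_attained stochastic_le_1)

subsection \<open>First hitting probabilities\<close>

definition first_hit_paths :: "'q set \<Rightarrow> nat \<Rightarrow> 'q \<Rightarrow> 'q list set" where
  "first_hit_paths S j a =
     {w. length w = Suc j \<and> w ! 0 = a \<and> (\<forall>i<j. w ! i \<notin> S) \<and> w ! j \<in> S}"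

lemma finite_first_hit_paths: "finite (first_hit_paths S j (a :: 'q::finite))"
  by (rule finite_subset[OF _ finite_lists_length_eq[of "UNIV :: 'q set" "Suc j"]])
     (auto simp: first_hit_paths_def)

lemma first_hit_paths_Suc:
  assumes "a \<notin> S"
  shows "first_hit_paths S (Suc j) a = Cons a ` (\<Union>b. first_hit_paths S j b)"
proof (intro set_eqI iffI)
  fix w assume w: "w \<in> first_hit_paths S (Suc j) a"
  then obtain w' where "w = a # w'"
    unfolding first_hit_paths_def by (cases w) auto
  moreover have "w' \<in> first_hit_paths S j (w' ! 0)"
    using w unfolding \<open>w = a # w'\<close> first_hit_paths_def by auto
  ultimately show "w \<in> Cons a ` (\<Union>b. first_hit_paths S j b)" by blast
next
  fix w assume "w \<in> Cons a ` (\<Union>b. first_hit_paths S j b)"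
  then show "w \<in> first_hit_paths S (Suc j) a"
    using assms by (auto simp: first_hit_paths_def less_Suc_eq_0_disj)
qed

lemma first_hit_prob_paths:
  "first_hit_prob P a S j = (\<Sum>w\<in>first_hit_paths S j a. \<Prod>i<j. P (w ! i) (w ! Suc i))"
  unfolding first_hit_prob_def first_hit_paths_def ..

lemma first_hit_prob_0 [simp]: "first_hit_prob P a S 0 = (if a \<in> S then 1 else 0)"
proof -
  have "first_hit_paths S 0 a = (if a \<in> S then {[a]} else {})"
    by (auto simp: first_hit_paths_def length_Suc_conv)
  then show ?thesis by (simp add: first_hit_prob_paths)
qed

lemma first_hit_prob_Suc [simp]:
  "first_hit_prob P a S (Suc j) =
     (if a \<in> S then 0 else (\<Sum>b\<in>UNIV. P a b * first_hit_prob P b S j))"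
proof (cases "a \<in> S")
  case True
  then have "first_hit_paths S (Suc j) a = {}"
    by (auto simp: first_hit_paths_def)
  with True show ?thesis by (simp add: first_hit_prob_paths)
next
  case False
  let ?f = "\<lambda>w. \<Prod>i<Suc j. P (w ! i) (w ! Suc i)"
  have "first_hit_prob P a S (Suc j) = (\<Sum>w\<in>(\<Union>b. first_hit_paths S j b). ?f (a # w))"
    by (simp add: first_hit_prob_paths first_hit_paths_Suc[OF False] sum.reindex)
  also have "\<dots> = (\<Sum>b\<in>UNIV. \<Sum>w\<in>first_hit_paths S j b. ?f (a # w))"
    by (intro sum.UNION_disjoint ballI finite_UNIV finite_first_hit_paths)
       (auto simp: first_hit_paths_def)
  also have "\<dots> = (\<Sum>b\<in>UNIV. \<Sum>w\<in>first_hit_paths S j b. P a b * (\<Prod>i<j. P (w ! i) (w ! Suc i)))"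
    by (intro sum.cong refl, subst prod.lessThan_Suc_shift) (auto simp: first_hit_paths_def)
  also have "\<dots> = (\<Sum>b\<in>UNIV. P a b * first_hit_prob P b S j)"
    by (simp add: sum_distrib_left first_hit_prob_paths)
  finally show ?thesis using False by simp
qed

lemma first_hit_prob_nonneg: "stochastic P \<Longrightarrow> 0 \<le> first_hit_prob P a S j"
  by (induction j arbitrary: a) (auto simp: stochastic_nonneg intro!: sum_nonneg)

lemma first_hit_prob_Suc_pos:
  assumes "stochastic P" and "0 < first_hit_prob P a S (Suc j)"
  obtains b where "a \<notin> S" "0 < P a b" "0 < first_hit_prob P b S j"
proof -
  from assms(2) have "a \<notin> S" and "0 < (\<Sum>b\<in>UNIV. P a b * first_hit_prob P b S j)"
    by (auto split: if_splits)
  then obtain b where "0 < P a b * first_hit_prob P b S j"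
    using sum_nonpos[of UNIV "\<lambda>b. P a b * first_hit_prob P b S j"] by (auto simp: not_less[symmetric])
  then have "P a b \<noteq> 0" "first_hit_prob P b S j \<noteq> 0" by auto
  with assms(1) have "0 < P a b" "0 < first_hit_prob P b S j"
    by (simp_all add: less_le stochastic_nonneg first_hit_prob_nonneg)
  with \<open>a \<notin> S\<close> show ?thesis by (rule that)
qed

lemma min_trans_pow_le_first_hit_prob:
  assumes "stochastic P" and "0 < first_hit_prob P a S j"
  shows "min_trans P ^ j \<le> first_hit_prob P a S j"
  using assms(2)
proof (induction j arbitrary: a)
  case (Suc j)
  from first_hit_prob_Suc_pos[OF assms(1) Suc.prems] obtain b
    where "a \<notin> S" "0 < P a b" and pos: "0 < first_hit_prob P b S j" .
  have "min_trans P ^ Suc j \<le> P a b * first_hit_prob P b S j"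
    using min_trans_le[of P a b] \<open>0 < P a b\<close> Suc.IH[OF pos] min_trans_pos[OF assms(1)]
    by (auto intro!: mult_mono)
  also have "\<dots> \<le> (\<Sum>c\<in>UNIV. P a c * first_hit_prob P c S j)"
    using assms(1) by (intro member_le_sum) (auto simp: stochastic_nonneg first_hit_prob_nonneg)
  finally show ?case using \<open>a \<notin> S\<close> by simp
qed (simp split: if_splits)

subsection \<open>Reachability of the target within \<open>n\<close> steps\<close>

lemma Kleene_iter_le_card:
  fixes F :: "'a::finite set \<Rightarrow> 'a set"
  assumes "mono F"
  shows "(F ^^ j) {} \<subseteq> (F ^^ card (UNIV :: 'a set)) {}"
proof -
  let ?C = "\<lambda>i. (F ^^ i) {}" and ?n = "card (UNIV :: 'a set)"
  have chain: "?C i \<subseteq> ?C i'" if "i \<le> i'" for i i'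
    using mono_funpow[OF assms] that by (auto simp: mono_def)
  have card_ge: "i \<le> card (?C i)" if "\<forall>i'<i. ?C i' \<noteq> ?C (Suc i')" for i
    using that
  proof (induction i)
    case (Suc i)
    then have "?C i \<subset> ?C (Suc i)" using chain[of i "Suc i"] by auto
    then have "card (?C i) < card (?C (Suc i))" by (rule psubset_card_mono[rotated]) simp
    with Suc show ?case by simp
  qed simp
  have fix_n: "?C (Suc ?n) = ?C ?n"
  proof (rule ccontr)
    assume neq: "?C (Suc ?n) \<noteq> ?C ?n"
    have "?C i \<noteq> ?C (Suc i)" if "i < Suc ?n" for i
    proof
      assume eq: "?C i = ?C (Suc i)"
      have const: "?C (i + d) = ?C i" for d
      proof (induction d)
        case (Suc d)
        have "?C (i + Suc d) = F (?C (i + d))" by simp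
        also have "\<dots> = F (?C i)" by (simp only: Suc.IH)
        also have "\<dots> = ?C i" using eq[symmetric] by simp
        finally show ?case .
      qed simp
      have "?C ?n = ?C i" "?C (Suc ?n) = ?C i"
        using const[of "?n - i"] const[of "Suc ?n - i"] that by simp_all
      with neq show False by simp
    qed
    then have "Suc ?n \<le> card (?C (Suc ?n))" by (intro card_ge) simp
    then show False using card_mono[of UNIV "?C (Suc ?n)"] by simp
  qed
  show ?thesis
    by (rule Kleene_iter_lpfp[OF assms]) (use fix_n in simp)
qed

text \<open>\<open>(reach_step P S ^^ j) {}\<close> is the set of states from which \<open>S\<close> can be reached
in fewer than \<open>j\<close> steps.\<close>

definition reach_step :: "('q \<Rightarrow> 'q \<Rightarrow> real) \<Rightarrow> 'q set \<Rightarrow> 'q set \<Rightarrow> 'q set" where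
  "reach_step P S X = S \<union> {a. \<exists>b\<in>X. 0 < P a b}"

lemma mem_reach_step_iff: "a \<in> reach_step P S X \<longleftrightarrow> a \<in> S \<or> (\<exists>b\<in>X. 0 < P a b)"
  by (simp add: reach_step_def)

lemma mono_reach_step: "mono (reach_step P S)"
  by (auto simp: mono_def reach_step_def)

lemma first_hit_prob_pos_reach:
  assumes "stochastic P" and "0 < first_hit_prob P a S j"
  shows "a \<in> (reach_step P S ^^ Suc j) {}"
  using assms(2)
proof (induction j arbitrary: a)
  case (Suc j)
  from first_hit_prob_Suc_pos[OF assms(1) Suc.prems] obtain b
    where "0 < P a b" "0 < first_hit_prob P b S j" .
  with Suc.IH have "a \<in> reach_step P S ((reach_step P S ^^ Suc j) {})"
    unfolding mem_reach_step_iff by blast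
  then show ?case by (simp only: funpow.simps(2) o_apply)
qed (simp add: mem_reach_step_iff split: if_splits)

lemma reach_first_hit_prob_pos:
  assumes "stochastic P" and "a \<in> (reach_step P S ^^ j) {}"
  shows "\<exists>j'<j. 0 < first_hit_prob P a S j'"
  using assms(2)
proof (induction j arbitrary: a)
  case (Suc j)
  show ?case
  proof (cases "a \<in> S")
    case False
    with Suc.prems obtain b where "b \<in> (reach_step P S ^^ j) {}" "0 < P a b"
      by (auto simp: mem_reach_step_iff)
    with Suc.IH obtain j' where "j' < j" "0 < first_hit_prob P b S j'" by blast
    have "0 < P a b * first_hit_prob P b S j'"
      using \<open>0 < P a b\<close> \<open>0 < first_hit_prob P b S j'\<close> by simp
    also have "\<dots> \<le> (\<Sum>c\<in>UNIV. P a c * first_hit_prob P c S j')"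
      using assms(1) by (intro member_le_sum) (auto simp: stochastic_nonneg first_hit_prob_nonneg)
    finally show ?thesis
      using False \<open>j' < j\<close> by (intro exI[of _ "Suc j'"]) simp
  qed (auto intro: exI[of _ 0])
qed simp

definition hits :: "('q::finite \<Rightarrow> 'q \<Rightarrow> real) \<Rightarrow> 'q set \<Rightarrow> 'q \<Rightarrow> bool" where
  "hits P S a \<longleftrightarrow> (\<exists>j. 0 < first_hit_prob P a S j)"

lemma not_hits_first_hit_prob:
  assumes "stochastic P" and "\<not> hits P S a"
  shows "first_hit_prob P a S j = 0"
proof -
  have "\<not> 0 < first_hit_prob P a S j"
    using assms(2) by (auto simp: hits_def)
  with first_hit_prob_nonneg[OF assms(1)] show ?thesis by (simp add: not_less order_antisym)
qed

lemma hits_first_hit_prob_pos_before_card: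
  assumes "stochastic P" and "hits P S (a :: 'q::finite)"
  shows "\<exists>j<card (UNIV :: 'q set). 0 < first_hit_prob P a S j"
proof -
  from assms(2) obtain j where "0 < first_hit_prob P a S j"
    unfolding hits_def by blast
  then have "a \<in> (reach_step P S ^^ card (UNIV :: 'q set)) {}"
    using first_hit_prob_pos_reach[OF assms(1)] Kleene_iter_le_card[OF mono_reach_step] by blast
  then show ?thesis by (rule reach_first_hit_prob_pos[OF assms(1)])
qed

lemma hits_min_trans_pow_le_sum:
  assumes "stochastic P" and "hits P S (a :: 'q::finite)"
  shows "min_trans P ^ card (UNIV :: 'q set) \<le> (\<Sum>j<card (UNIV :: 'q set). first_hit_prob P a S j)"
proof -
  let ?n = "card (UNIV :: 'q set)"
  obtain j where "j < ?n" and pos: "0 < first_hit_prob P a S j"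
    using hits_first_hit_prob_pos_before_card[OF assms] by blast
  have "min_trans P ^ ?n \<le> min_trans P ^ j"
    using \<open>j < ?n\<close> min_trans_pos[OF assms(1)] min_trans_le_1[OF assms(1)]
    by (intro power_decreasing) auto
  also have "\<dots> \<le> first_hit_prob P a S j"
    by (rule min_trans_pow_le_first_hit_prob[OF assms(1) pos])
  also have "\<dots> \<le> (\<Sum>j<?n. first_hit_prob P a S j)"
    using \<open>j < ?n\<close> by (intro member_le_sum) (auto simp: first_hit_prob_nonneg assms(1))
  finally show ?thesis .
qed

subsection \<open>Survival probabilities\<close>

text \<open>\<open>stay_prob P S m a\<close> is the probability that the run from \<open>a\<close> spends its first \<open>m\<close>
steps outside \<open>S\<close> in states from which \<open>S\<close> is hit with positive probability, and is
again in such a state after \<open>m\<close> steps.\<close>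

fun stay_prob :: "('q::finite \<Rightarrow> 'q \<Rightarrow> real) \<Rightarrow> 'q set \<Rightarrow> nat \<Rightarrow> 'q \<Rightarrow> real" where
  "stay_prob P S 0 a = (if hits P S a then 1 else 0)"
| "stay_prob P S (Suc m) a =
     (if a \<in> S \<or> \<not> hits P S a then 0 else (\<Sum>b\<in>UNIV. P a b * stay_prob P S m b))"

lemma stay_prob_nonneg: "stochastic P \<Longrightarrow> 0 \<le> stay_prob P S m a"
  by (induction m arbitrary: a) (auto simp: stochastic_nonneg intro!: sum_nonneg)

lemma stay_prob_not_hits: "\<not> hits P S a \<Longrightarrow> stay_prob P S m a = 0"
  by (cases m) auto

lemma stay_prob_le_1: "stochastic P \<Longrightarrow> stay_prob P S m a \<le> 1"
  by (induction m arbitrary: a) (auto intro: stochastic_convex_le)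

lemma stay_prob_plus_sum_first_hit_prob_le_1:
  assumes "stochastic P"
  shows "stay_prob P S m a + (\<Sum>j<m. first_hit_prob P a S j) \<le> 1"
proof (induction m arbitrary: a)
  case (Suc m)
  consider "a \<in> S" | "\<not> hits P S a" | "a \<notin> S" "hits P S a" by blast
  then show ?case
  proof cases
    case 1
    then show ?thesis by (simp add: sum.lessThan_Suc_shift del: sum.lessThan_Suc)
  next
    case 2
    then show ?thesis by (simp add: not_hits_first_hit_prob[OF assms] stay_prob_not_hits)
  next
    case 3
    then have "stay_prob P S (Suc m) a + (\<Sum>j<Suc m. first_hit_prob P a S j)
        = (\<Sum>b\<in>UNIV. P a b * (stay_prob P S m b + (\<Sum>j<m. first_hit_prob P b S j)))"
      by (simp add: sum.lessThan_Suc_shift sum_distrib_left sum.swap[of _ "{..<m}"]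
          distrib_left sum.distrib del: sum.lessThan_Suc)
    also have "\<dots> \<le> 1"
      using Suc.IH by (intro stochastic_convex_le[OF assms])
    finally show ?thesis .
  qed
qed simp

lemma sum_first_hit_prob_le_stay_prob:
  assumes "stochastic P"
  shows "(\<Sum>j<N. first_hit_prob P a S (j + k)) \<le> stay_prob P S k a"
proof (induction k arbitrary: a)
  case 0
  show ?case
    using stay_prob_plus_sum_first_hit_prob_le_1[OF assms, of S N a]
      stay_prob_nonneg[OF assms, of S N a] not_hits_first_hit_prob[OF assms]
    by auto
next
  case (Suc k)
  show ?case
  proof (cases "a \<in> S \<or> \<not> hits P S a")
    case False
    then have "(\<Sum>j<N. first_hit_prob P a S (j + Suc k))
        = (\<Sum>b\<in>UNIV. P a b * (\<Sum>j<N. first_hit_prob P b S (j + k)))"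
      by (simp add: sum_distrib_left sum.swap[of _ "{..<N}"])
    also have "\<dots> \<le> (\<Sum>b\<in>UNIV. P a b * stay_prob P S k b)"
      using Suc.IH assms by (intro sum_mono mult_left_mono) (auto simp: stochastic_nonneg)
    finally show ?thesis using False by simp
  next
    case True
    then show ?thesis
      by (cases "a \<in> S") (simp, simp add: not_hits_first_hit_prob[OF assms] del: first_hit_prob_Suc)
  qed
qed

lemma hit_tail_prob_le_stay_prob:
  assumes "stochastic P"
  shows "hit_tail_prob P a S k \<le> stay_prob P S k a"
  unfolding hit_tail_prob_def
proof (rule suminf_le_const)
  show "summable (\<lambda>j. first_hit_prob P a S (j + k))"
    using first_hit_prob_nonneg sum_first_hit_prob_le_stay_prob assms
    by (intro summableI_nonneg_bounded) auto
qed (rule sum_first_hit_prob_le_stay_prob[OF assms])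

text \<open>Markov property: surviving \<open>i + m\<close> steps means surviving \<open>i\<close> steps and then
\<open>m\<close> more from the state reached.\<close>

lemma stay_prob_add_le:
  assumes "stochastic P" and "\<And>b. stay_prob P S m b \<le> B"
  shows "stay_prob P S (i + m) a \<le> stay_prob P S i a * B"
proof (induction i arbitrary: a)
  case 0
  then show ?case
    using assms(2)[of a] by (cases m) auto
next
  case (Suc i)
  show ?case
  proof (cases "a \<in> S \<or> \<not> hits P S a")
    case False
    then have "stay_prob P S (Suc i + m) a = (\<Sum>b\<in>UNIV. P a b * stay_prob P S (i + m) b)"
      by simp
    also have "\<dots> \<le> (\<Sum>b\<in>UNIV. P a b * (stay_prob P S i b * B))"
      using Suc.IH assms(1) by (intro sum_mono mult_left_mono) (auto simp: stochastic_nonneg)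
    also have "\<dots> = stay_prob P S (Suc i) a * B"
      using False by (simp add: sum_distrib_right mult.assoc)
    finally show ?thesis .
  qed auto
qed

lemma stay_prob_card_le:
  assumes "stochastic P"
  shows "stay_prob P S (card (UNIV :: 'q set)) (a :: 'q::finite) \<le> 1 - min_trans P ^ card (UNIV :: 'q set)"
proof (cases "hits P S a")
  case True
  then show ?thesis
    using stay_prob_plus_sum_first_hit_prob_le_1[OF assms, of S "card (UNIV :: 'q set)" a]
      hits_min_trans_pow_le_sum[OF assms True]
    by linarith
next
  case False
  then show ?thesis
    using min_trans_pos[OF assms] min_trans_le_1[OF assms]
    by (simp add: stay_prob_not_hits power_le_one)
qed

lemma stay_prob_le_pow_div:
  assumes "stochastic P"
  shows "stay_prob P S k (a :: 'q::finite)
           \<le> (1 - min_trans P ^ card (UNIV :: 'q set)) ^ (k div card (UNIV :: 'q set))"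
proof -
  let ?n = "card (UNIV :: 'q set)" and ?z = "1 - min_trans P ^ card (UNIV :: 'q set)"
  have "0 \<le> ?z"
    using min_trans_pos[OF assms] min_trans_le_1[OF assms] by (simp add: power_le_one)
  have blocks: "stay_prob P S (i * ?n) b \<le> ?z ^ i" for i b
  proof (induction i arbitrary: b)
    case (Suc i)
    have "stay_prob P S (?n + i * ?n) b \<le> stay_prob P S ?n b * ?z ^ i"
      by (rule stay_prob_add_le[OF assms Suc.IH])
    also have "\<dots> \<le> ?z * ?z ^ i"
      using stay_prob_card_le[OF assms] \<open>0 \<le> ?z\<close> by (intro mult_right_mono) auto
    finally show ?case by simp
  qed (simp add: stay_prob_le_1[OF assms])
  have "stay_prob P S (k mod ?n + k div ?n * ?n) a \<le> stay_prob P S (k mod ?n) a * ?z ^ (k div ?n)"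
    by (rule stay_prob_add_le[OF assms blocks])
  also have "\<dots> \<le> ?z ^ (k div ?n)"
    using stay_prob_le_1[OF assms] stay_prob_nonneg[OF assms] \<open>0 \<le> ?z\<close>
    by (intro mult_left_le_one_le) auto
  finally show ?thesis by simp
qed

subsection \<open>The exponential bound\<close>

lemma one_minus_le_two_exp: "1 - z \<le> 2 * exp (- 2 * z :: real)"
proof -
  have "1 - z = (1 - (2 * z - 1)) / 2" by simp
  also have "\<dots> \<le> exp (- (2 * z - 1)) / 2"
    using exp_ge_add_one_self[of "- (2 * z - 1)"] by simp
  also have "\<dots> = exp 1 / 2 * exp (- 2 * z)" by (simp add: exp_add[symmetric])
  also have "\<dots> \<le> 2 * exp (- 2 * z)" using exp_le by (intro mult_right_mono) auto
  finally show ?thesis .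
qed

lemma one_minus_pow_div_le_two_exp:
  fixes z :: real and n k :: nat
  assumes "0 \<le> z" "z \<le> 1" and "0 < n" "n \<le> k"
  shows "(1 - z) ^ (k div n) \<le> 2 * exp (- z / real n) ^ k"
proof -
  have "n div n \<le> k div n"
    using assms(4) by (rule div_le_mono)
  then obtain m where m: "k div n = Suc m"
    using assms(3) by (cases "k div n") auto
  have "k < (m + 2) * n"
    using div_mult_mod_eq[of k n] mod_less_divisor[OF assms(3), of k] m by (simp add: algebra_simps)
  then have "real k < (real m + 2) * real n"
    by (metis of_nat_less_iff of_nat_mult of_nat_add of_nat_numeral)
  then have k_div_n: "real k / real n \<le> real m + 2"
    using assms(3) by (simp add: divide_le_eq)
  have "(1 - z) ^ (k div n) = (1 - z) * (1 - z) ^ m" by (simp add: m)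
  also have "\<dots> \<le> 2 * exp (- 2 * z) * exp (- z) ^ m"
    using one_minus_le_two_exp[of z] exp_ge_add_one_self[of "- z"] assms(1,2)
    by (intro mult_mono power_mono) auto
  also have "\<dots> = 2 * exp (- (real m + 2) * z)"
    by (simp add: exp_of_nat_mult[symmetric] mult.assoc exp_add[symmetric] algebra_simps)
  also have "\<dots> \<le> 2 * exp (real k * (- z / real n))"
    using mult_right_mono[OF k_div_n assms(1)] by (simp add: algebra_simps)
  also have "\<dots> = 2 * exp (- z / real n) ^ k"
    by (simp only: exp_of_nat_mult)
  finally show ?thesis .
qed

theorem mainTheorem3:
  fixes P :: "'q::finite \<Rightarrow> 'q \<Rightarrow> real" and p :: 'q and S :: "'q set" and k :: nat
  assumes "stochastic P"
    and "k \<ge> card (UNIV :: 'q set)"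
  shows "hit_tail_prob P p S k
           \<le> 2 * (exp (- ((min_trans P) ^ (card (UNIV :: 'q set))) / real (card (UNIV :: 'q set)))) ^ k"
proof -
  let ?n = "card (UNIV :: 'q set)" and ?z = "min_trans P ^ card (UNIV :: 'q set)"
  have "0 \<le> ?z" "?z \<le> 1"
    using min_trans_pos[OF assms(1)] min_trans_le_1[OF assms(1)] by (auto simp: power_le_one)
  have "hit_tail_prob P p S k \<le> stay_prob P S k p"
    by (rule hit_tail_prob_le_stay_prob[OF assms(1)])
  also have "\<dots> \<le> (1 - ?z) ^ (k div ?n)"
    by (rule stay_prob_le_pow_div[OF assms(1)])
  also have "\<dots> \<le> 2 * exp (- ?z / real ?n) ^ k"
    using \<open>0 \<le> ?z\<close> \<open>?z \<le> 1\<close> assms(2)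
    by (intro one_minus_pow_div_le_two_exp) (auto simp: finite_UNIV_card_ge_0)
  finally show ?thesis .
qed

end
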